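(* (1) Let $1\le\ell_1\le\dots\le\ell_r\le n$ and $T=C_r\otimes\cdots\otimes C_1$ with $C_i\in B(\varpi_{\ell_i})$. Then $\psi_T=\prod_{i=1}^{r-1}\psi_{C_{i+1}\otimes C_i}$. (2) Let $1\le a\le b\le n$, $F\in B(\varpi_b)$, $E\in B(\varpi_a)$. Then: (a) if $F\otimes E$ is not semistandard then $\psi_{F\otimes E}=0$; (b) if $E=(1,\dots,a)$ and $F\otimes E$ is semistandard then $\psi_{F\otimes E}=1$; (c) if $F\otimes E$ is semistandard and $j\notin E$, $j+1\in E$, then $$\psi_{F\otimes E}=\begin{cases}t\,\psi_{s_jF\otimes s_jE}+(1-t)\,\psi_{F\otimes s_jE}, & \text{if } j\in F,\ j+1\notin F,\\ \psi_{s_jF\otimes s_jE}, &\text{otherwise.}\end{cases}$$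
   Context: Fix $n\ge1$, $[n]=\{1,\dots,n\}$, $\varpi_k=\varepsilon_1+\dots+\varepsilon_k\in\mathbb Z^n$. A column of length $\ell$ is $C=(c_1<\dots<c_\ell)\subseteq[n]$; $B(\varpi_\ell)$ is their set. $s_jC$ is the column whose underlying set is the image of $C$ under the transposition $(j,j+1)$. A tensor $T=C_r\otimes\cdots\otimes C_1$ ($C_i\in B(\varpi_{\ell_i})$, $\ell_1\le\dots\le\ell_r$) is the filling of the Young diagram of $\sum\varpi_{\ell_i}$ with columns $C_r,\dots,C_1$ from left to right (each top to bottom); it is semistandard if entries weakly increase along rows from left to right. Macdonald's $\psi$: for partitions $\mu\subseteq\lambda$ with $\theta=\lambda-\mu$ a horizontal strip ($\lambda_1\ge\mu_1\ge\lambda_2\ge\mu_2\ge\cdots$), let $\theta'_j$ be the number of boxes of $\theta$ in column $j$, $J=\{j\ge1:\theta'_j=0,\ \theta'_{j+1}=1\}$, $m_j(\mu)=\#\{i:\mu_i=j\}$, and $\psi_{\lambda/\mu}=\prod_{j\in J}(1-t^{m_j(\mu)})$. For a semistandard $T$ let $T_{\le i}$ be the shape (partition) formed by the boxes with entries $\le i$, and $\psi_T=\prod_{i=1}^{n-1}\psi_{T_{\le i+1}/T_{\le i}}\in\mathbb Z[t]$. For non-semistandard $T$ set $\psi_T=0$. *)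

theory Defs
  imports "HOL-Computational_Algebra.Polynomial"
begin

definition column :: "nat \<Rightarrow> nat \<Rightarrow> nat set \<Rightarrow> bool" where
  "column n l C \<longleftrightarrow> C \<subseteq> {1..n} \<and> card C = l"

text \<open>The entry of column C in row m (rows numbered from 1, top to bottom).\<close>
definition entry :: "nat set \<Rightarrow> nat \<Rightarrow> nat" where
  "entry C m = sorted_list_of_set C ! (m - 1)"

text \<open>A tensor C_r (x) ... (x) C_1 is represented by the list of its columns
  from left to right, i.e. [C_r, ..., C_1].\<close>
definition tensor :: "nat \<Rightarrow> (nat \<Rightarrow> nat set) \<Rightarrow> nat set list" where
  "tensor r C = map (\<lambda>k. C (r - k)) [0..<r]"

definition semistandard :: "nat set list \<Rightarrow> bool" where
  "semistandard T \<longleftrightarrow>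
     (\<forall>k. Suc k < length T \<longrightarrow> card (T ! Suc k) \<le> card (T ! k) \<and>
        (\<forall>m. 1 \<le> m \<and> m \<le> card (T ! Suc k) \<longrightarrow> entry (T ! k) m \<le> entry (T ! Suc k) m))"

text \<open>Shape T_{<= i}: row m (m >= 1) has as many boxes as there are boxes in row m with
  entries <= i. Partitions are functions from row indices (>= 1) to row lengths.\<close>
definition shape_le :: "nat set list \<Rightarrow> nat \<Rightarrow> nat \<Rightarrow> nat" where
  "shape_le T i m = card {k. k < length T \<and> m \<le> card (T ! k) \<and> entry (T ! k) m \<le> i}"

definition conj_part :: "(nat \<Rightarrow> nat) \<Rightarrow> nat \<Rightarrow> nat" where
  "conj_part lam j = card {i. 1 \<le> i \<and> j \<le> lam i}"

definition mult_part :: "(nat \<Rightarrow> nat) \<Rightarrow> nat \<Rightarrow> nat" where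
  "mult_part mu j = card {i. 1 \<le> i \<and> mu i = j}"

text \<open>Macdonald's psi_{lambda/mu} in Z[t] (t = [:0,1:]).\<close>
definition psi_skew :: "(nat \<Rightarrow> nat) \<Rightarrow> (nat \<Rightarrow> nat) \<Rightarrow> int poly" where
  "psi_skew lam mu =
     (let th = (\<lambda>j. conj_part lam j - conj_part mu j) in
      \<Prod>j \<in> {j. 1 \<le> j \<and> th j = 0 \<and> th (j + 1) = 1}. 1 - [:0, 1:] ^ mult_part mu j)"

definition psiT :: "nat \<Rightarrow> nat set list \<Rightarrow> int poly" where
  "psiT n T = (if semistandard T
      then (\<Prod>i = 1..<n. psi_skew (shape_le T (i + 1)) (shape_le T i))
      else 0)"

definition sj :: "nat \<Rightarrow> nat set \<Rightarrow> nat set" where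
  "sj j C = (\<lambda>x. if x = j then j + 1 else if x = j + 1 then j else x) ` C"

end

theory Submission
  imports Defs "HOL-Combinatorics.Transposition"
begin

text \<open>Write \<open>count_le C i\<close> for the number of entries \<open>\<le> i\<close> of a column \<open>C\<close>. A pair of
  columns \<open>[A, B]\<close> is semistandard iff \<open>count_le B \<le> count_le A\<close> pointwise, and the
  \<open>j\<close>-th column of the shape \<open>T\<^sub>\<le>\<^sub>i\<close> has exactly \<open>count_le C i\<close> boxes, \<open>C\<close> the \<open>j\<close>-th column
  of \<open>T\<close>. So the strip \<open>T\<^sub>\<le>\<^sub>i\<^sub>+\<^sub>1 / T\<^sub>\<le>\<^sub>i\<close> has a box in column \<open>j\<close> iff \<open>i + 1\<close> occurs in the
  \<open>j\<close>-th column of \<open>T\<close>, and \<open>\<psi>\<^sub>T\<close> is a product of factors \<open>psi_factor A B i\<close>, each depending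
  only on two adjacent columns \<open>A, B\<close>; this gives (1). For two columns inside \<open>[n]\<close> the
  product of these factors vanishes by itself when the pair is not semistandard, so
  \<open>\<psi>\<^sub>F\<^sub>\<otimes>\<^sub>E\<close> is always the plain product, and (2c) reduces to comparing the factors at
  \<open>i = j - 1\<close> and \<open>i = j\<close>, the only ones \<open>s\<^sub>j\<close> changes.\<close>

definition count_le :: "nat set \<Rightarrow> nat \<Rightarrow> nat" where
  "count_le C i = card {x \<in> C. x \<le> i}"

definition psi_factor :: "nat set \<Rightarrow> nat set \<Rightarrow> nat \<Rightarrow> int poly" where
  "psi_factor A B i =
     (if Suc i \<notin> A \<and> Suc i \<in> B then 1 - [:0, 1:] ^ (count_le A i - count_le B i) else 1)"

lemma count_le_le_card: "finite C \<Longrightarrow> count_le C i \<le> card C"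
  unfolding count_le_def by (rule card_mono) auto

lemma count_le_eq_card: "finite C \<Longrightarrow> \<forall>x\<in>C. x \<le> i \<Longrightarrow> count_le C i = card C"
  unfolding count_le_def by (rule arg_cong[where f = card]) auto

lemma count_le_mono: "i \<le> k \<Longrightarrow> count_le C i \<le> count_le C k"
  unfolding count_le_def by (rule card_mono) auto

lemma count_le_0: "0 \<notin> C \<Longrightarrow> count_le C 0 = 0"
  unfolding count_le_def by (auto intro: arg_cong[where f = card])

lemma count_le_Suc:
  assumes "finite C"
  shows "count_le C (Suc i) = count_le C i + (if Suc i \<in> C then 1 else 0)"
proof -
  have "{x \<in> C. x \<le> Suc i} = {x \<in> C. x \<le> i} \<union> (if Suc i \<in> C then {Suc i} else {})"
    by (auto simp: le_Suc_eq)
  then show ?thesis unfolding count_le_def using assms by (auto simp: card_insert_if)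
qed

lemma sorted_nth_le_iff_less_length_filter:
  "sorted xs \<Longrightarrow> q < length xs \<Longrightarrow> xs ! q \<le> (i::nat) \<longleftrightarrow> q < length (filter (\<lambda>x. x \<le> i) xs)"
proof (induction xs arbitrary: q)
  case Nil
  then show ?case by simp
next
  case (Cons x xs)
  have "filter (\<lambda>x. x \<le> i) xs = []" if "x > i"
    using Cons.prems(1) that by (auto simp: filter_empty_conv)
  moreover have "xs ! q' \<ge> x" if "q' < length xs" for q'
    using Cons.prems(1) that by (simp add: sorted_wrt_nth_less)
  ultimately show ?case
    using Cons by (cases q) (auto simp: not_le)
qed

lemma entry_le_iff_less_count_le:
  assumes "finite C" "q < card C"
  shows "entry C (Suc q) \<le> i \<longleftrightarrow> q < count_le C i"
proof -
  let ?xs = "sorted_list_of_set C"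
  have "count_le C i = length (filter (\<lambda>x. x \<le> i) ?xs)"
    unfolding count_le_def using assms(1) by (simp add: distinct_length_filter Int_def conj_commute)
  then show ?thesis
    using sorted_nth_le_iff_less_length_filter[of ?xs q i] assms by (simp add: entry_def)
qed

lemma semistandard_pair_iff:
  "semistandard [A, B] \<longleftrightarrow>
     card B \<le> card A \<and> (\<forall>m. 1 \<le> m \<and> m \<le> card B \<longrightarrow> entry A m \<le> entry B m)"
  unfolding semistandard_def by (auto simp: less_Suc_eq)

lemma semistandard_iff_adjacent_pairs:
  "semistandard T \<longleftrightarrow> (\<forall>k. Suc k < length T \<longrightarrow> semistandard [T ! k, T ! Suc k])"
  unfolding semistandard_pair_iff by (simp add: semistandard_def)

lemma semistandard_pair_iff_count_le:
  assumes A: "finite A" and B: "finite B"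
  shows "semistandard [A, B] \<longleftrightarrow> (\<forall>i. count_le B i \<le> count_le A i)"
proof
  assume ss: "semistandard [A, B]"
  show "\<forall>i. count_le B i \<le> count_le A i"
  proof
    fix i
    show "count_le B i \<le> count_le A i"
    proof (cases "count_le B i")
      case (Suc c)
      have c: "c < card B" using count_le_le_card[OF B, of i] Suc by simp
      then have "entry B (Suc c) \<le> i" using entry_le_iff_less_count_le[OF B] Suc by simp
      moreover have "entry A (Suc c) \<le> entry B (Suc c)" "card B \<le> card A"
        using ss c unfolding semistandard_pair_iff by auto
      ultimately show ?thesis using entry_le_iff_less_count_le[OF A, of c i] c Suc by simp
    qed simp
  qed
next
  assume dom: "\<forall>i. count_le B i \<le> count_le A i"
  obtain N where N: "\<forall>x\<in>A \<union> B. x \<le> N"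
    using A B finite_nat_set_iff_bounded_le by (meson finite_UnI)
  have card: "card B \<le> card A"
    using dom[rule_format, of N] count_le_eq_card[OF A, of N] count_le_eq_card[OF B, of N] N by simp
  have "entry A (Suc q) \<le> entry B (Suc q)" if q: "q < card B" for q
  proof -
    have "q < count_le B (entry B (Suc q))"
      using entry_le_iff_less_count_le[OF B q, of "entry B (Suc q)"] by simp
    then have "q < count_le A (entry B (Suc q))"
      using dom[rule_format, of "entry B (Suc q)"] by linarith
    then show ?thesis using entry_le_iff_less_count_le[OF A] q card by simp
  qed
  then have "entry A m \<le> entry B m" if "1 \<le> m" "m \<le> card B" for m
    using that by (cases m) auto
  then show "semistandard [A, B]"
    unfolding semistandard_pair_iff using card by blast
qed

lemma semistandard_nth_pair:
  assumes ss: "semistandard T" and fin: "\<forall>k<length T. finite (T ! k)"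
    and "k' \<le> k" "k < length T"
  shows "semistandard [T ! k', T ! k]"
proof -
  have "count_le (T ! k) i \<le> count_le (T ! k') i" for i
    using assms(3,4)
  proof (induction k)
    case (Suc k)
    show ?case
    proof (cases "k' = Suc k")
      case False
      have "semistandard [T ! k, T ! Suc k]"
        using ss Suc.prems(2) semistandard_iff_adjacent_pairs by blast
      then have "count_le (T ! Suc k) i \<le> count_le (T ! k) i"
        using semistandard_pair_iff_count_le[of "T ! k" "T ! Suc k"] fin Suc.prems(2) by simp
      moreover have "count_le (T ! k) i \<le> count_le (T ! k') i"
        using Suc False by simp
      ultimately show ?thesis by (rule order_trans)
    qed simp
  qed simp
  moreover have "finite (T ! k')" "finite (T ! k)" using fin assms(3,4) by simp_all
  ultimately show ?thesis using semistandard_pair_iff_count_le by blast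
qed

lemma down_closed_mem_iff_less_card:
  fixes S :: "nat set"
  assumes "finite S" and down: "\<And>k k'. k \<in> S \<Longrightarrow> k' \<le> k \<Longrightarrow> k' \<in> S"
  shows "k \<in> S \<longleftrightarrow> k < card S"
proof
  assume "k \<in> S"
  then have "{..k} \<subseteq> S" using down by auto
  then have "card {..k} \<le> card S" by (rule card_mono[OF assms(1)])
  then show "k < card S" by simp
next
  assume k: "k < card S"
  show "k \<in> S"
  proof (rule ccontr)
    assume "k \<notin> S"
    then have "S \<subseteq> {..<k}" using down by (auto simp: not_less[symmetric])
    then show False using card_mono[of "{..<k}" S] k by simp
  qed
qed

text \<open>In a semistandard tableau the boxes of row \<open>m\<close> with entries \<open>\<le> i\<close> form an initial
  segment of the row.\<close>

lemma less_shape_le_iff: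
  assumes ss: "semistandard T" and fin: "\<forall>k<length T. finite (T ! k)" and "1 \<le> m"
  shows "k < shape_le T i m \<longleftrightarrow> k < length T \<and> m \<le> card (T ! k) \<and> entry (T ! k) m \<le> i"
proof -
  let ?S = "{k. k < length T \<and> m \<le> card (T ! k) \<and> entry (T ! k) m \<le> i}"
  have down: "k' \<in> ?S" if k: "k \<in> ?S" and "k' \<le> k" for k k'
  proof -
    have "card (T ! k) \<le> card (T ! k')"
      and "entry (T ! k') m \<le> entry (T ! k) m"
      using semistandard_nth_pair[OF ss fin \<open>k' \<le> k\<close>] k \<open>1 \<le> m\<close>
      unfolding semistandard_pair_iff by auto
    then show ?thesis using k \<open>k' \<le> k\<close> by auto
  qed
  have "finite ?S" by simp
  then have "k \<in> ?S \<longleftrightarrow> k < card ?S"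
    using down by (rule down_closed_mem_iff_less_card)
  then show ?thesis unfolding shape_le_def by simp
qed

lemma conj_part_shape_le:
  assumes ss: "semistandard T" and fin: "\<forall>k<length T. finite (T ! k)"
  shows "conj_part (shape_le T i) j =
           (if 1 \<le> j \<and> j \<le> length T then count_le (T ! (j - 1)) i else 0)"
proof (cases j)
  case 0
  then show ?thesis unfolding conj_part_def by (simp add: infinite_Ici[unfolded atLeast_def])
next
  case (Suc p)
  have "{m. 1 \<le> m \<and> j \<le> shape_le T i m} =
          {m. 1 \<le> m \<and> p < length T \<and> m \<le> card (T ! p) \<and> entry (T ! p) m \<le> i}"
    using less_shape_le_iff[OF ss fin] Suc by (auto simp: Suc_le_eq)
  also have "\<dots> = (if p < length T then Suc ` {..<count_le (T ! p) i} else {})"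
  proof (cases "p < length T")
    case True
    then have fp: "finite (T ! p)" using fin by simp
    have "(Suc q \<le> card (T ! p) \<and> entry (T ! p) (Suc q) \<le> i) \<longleftrightarrow> q < count_le (T ! p) i" for q
      using entry_le_iff_less_count_le[OF fp, of q i] count_le_le_card[OF fp, of i]
      by (cases "q < card (T ! p)") auto
    then have "(1 \<le> m \<and> m \<le> card (T ! p) \<and> entry (T ! p) m \<le> i) \<longleftrightarrow>
                 m \<in> Suc ` {..<count_le (T ! p) i}" for m
      by (cases m) auto
    then show ?thesis using True by auto
  qed simp
  finally show ?thesis unfolding conj_part_def using Suc by (simp add: card_image)
qed

lemma finite_shape_le_ge:
  assumes ss: "semistandard T" and fin: "\<forall>k<length T. finite (T ! k)" and "1 \<le> j"
  shows "finite {m. 1 \<le> m \<and> j \<le> shape_le T i m}"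
proof (rule finite_subset)
  show "{m. 1 \<le> m \<and> j \<le> shape_le T i m} \<subseteq> {..card (T ! (j - 1))}"
  proof
    fix m assume "m \<in> {m. 1 \<le> m \<and> j \<le> shape_le T i m}"
    then have "1 \<le> m" "j - 1 < shape_le T i m" using \<open>1 \<le> j\<close> by auto
    then show "m \<in> {..card (T ! (j - 1))}" using less_shape_le_iff[OF ss fin] by auto
  qed
qed simp

lemma mult_part_eq_conj_part_diff:
  assumes "finite {m. 1 \<le> m \<and> j \<le> mu m}"
  shows "mult_part mu j = conj_part mu j - conj_part mu (Suc j)"
proof -
  have "{m. 1 \<le> m \<and> mu m = j} = {m. 1 \<le> m \<and> j \<le> mu m} - {m. 1 \<le> m \<and> Suc j \<le> mu m}"
    by auto
  moreover have "{m. 1 \<le> m \<and> Suc j \<le> mu m} \<subseteq> {m. 1 \<le> m \<and> j \<le> mu m}" by auto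
  ultimately show ?thesis
    unfolding mult_part_def conj_part_def using assms by (simp add: card_Diff_subset finite_subset)
qed

lemma psi_skew_shape_le_eq_prod_psi_factor:
  assumes ss: "semistandard T" and fin: "\<forall>k<length T. finite (T ! k)"
  shows "psi_skew (shape_le T (i + 1)) (shape_le T i) =
           (\<Prod>p<length T - 1. psi_factor (T ! p) (T ! Suc p) i)"
proof -
  let ?L = "length T"
  let ?th = "\<lambda>j. conj_part (shape_le T (i + 1)) j - conj_part (shape_le T i) j"
  have th: "?th j = (if 1 \<le> j \<and> j \<le> ?L \<and> Suc i \<in> T ! (j - 1) then 1 else 0)" for j
    using fin by (auto simp: conj_part_shape_le[OF ss fin] count_le_Suc)
  define P where "P = {p. p < ?L - 1 \<and> Suc i \<notin> T ! p \<and> Suc i \<in> T ! Suc p}"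
  have "{j. 1 \<le> j \<and> ?th j = 0 \<and> ?th (j + 1) = 1} = Suc ` P"
  proof (rule set_eqI)
    fix j
    show "j \<in> {j. 1 \<le> j \<and> ?th j = 0 \<and> ?th (j + 1) = 1} \<longleftrightarrow> j \<in> Suc ` P"
      unfolding th P_def by (cases j) auto
  qed
  moreover have "mult_part (shape_le T i) (Suc p) = count_le (T ! p) i - count_le (T ! Suc p) i"
    if "p \<in> P" for p
    using that mult_part_eq_conj_part_diff[OF finite_shape_le_ge[OF ss fin, of "Suc p"]]
    by (auto simp: P_def conj_part_shape_le[OF ss fin])
  ultimately have "psi_skew (shape_le T (i + 1)) (shape_le T i) =
      (\<Prod>p\<in>P. 1 - [:0, 1:] ^ (count_le (T ! p) i - count_le (T ! Suc p) i))"
    unfolding psi_skew_def Let_def by (simp add: prod.reindex)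
  also have "\<dots> = (\<Prod>p<?L - 1. psi_factor (T ! p) (T ! Suc p) i)"
    unfolding P_def psi_factor_def by (simp add: prod.If_cases Int_def conj_commute)
  finally show ?thesis .
qed

lemma psiT_eq_prod_psi_factor:
  assumes "\<forall>k<length T. finite (T ! k)"
  shows "psiT n T = (if semistandard T
           then (\<Prod>i = 1..<n. \<Prod>p<length T - 1. psi_factor (T ! p) (T ! Suc p) i) else 0)"
  unfolding psiT_def using psi_skew_shape_le_eq_prod_psi_factor[OF _ assms] by simp

lemma psiT_pair_eq_prod_psi_factor:
  assumes "finite A" "finite B"
  shows "psiT n [A, B] = (if semistandard [A, B] then (\<Prod>i = 1..<n. psi_factor A B i) else 0)"
  using psiT_eq_prod_psi_factor[of "[A, B]" n] assms by (simp add: less_Suc_eq)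

lemma psiT_eq_prod_adjacent_pairs:
  assumes fin: "\<forall>k<length T. finite (T ! k)"
  shows "psiT n T = (\<Prod>p<length T - 1. psiT n [T ! p, T ! Suc p])"
proof (cases "semistandard T")
  case True
  have pair: "psiT n [T ! p, T ! Suc p] = (\<Prod>i = 1..<n. psi_factor (T ! p) (T ! Suc p) i)"
    if "p < length T - 1" for p
  proof -
    have "semistandard [T ! p, T ! Suc p]"
      using True that unfolding semistandard_iff_adjacent_pairs[of T] by simp
    then show ?thesis using psiT_pair_eq_prod_psi_factor fin that by simp
  qed
  have "psiT n T = (\<Prod>i = 1..<n. \<Prod>p<length T - 1. psi_factor (T ! p) (T ! Suc p) i)"
    using True by (simp add: psiT_eq_prod_psi_factor[OF fin])
  also have "\<dots> = (\<Prod>p<length T - 1. \<Prod>i = 1..<n. psi_factor (T ! p) (T ! Suc p) i)"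
    by (rule prod.swap)
  finally show ?thesis using pair by simp
next
  case False
  then obtain p where p: "Suc p < length T" "\<not> semistandard [T ! p, T ! Suc p]"
    using semistandard_iff_adjacent_pairs by blast
  then have "psiT n [T ! p, T ! Suc p] = 0" by (simp add: psiT_def)
  then have "(\<Prod>p<length T - 1. psiT n [T ! p, T ! Suc p]) = 0"
    using p(1) by (intro prod_zero bexI[of _ p]) auto
  then show ?thesis using False by (simp add: psiT_def)
qed

lemma psiT_tensor:
  assumes "\<forall>i\<in>{1..r}. finite (C i)"
  shows "psiT n (tensor r C) = (\<Prod>i = 1..<r. psiT n [C (i + 1), C i])"
proof -
  have "psiT n (tensor r C) = (\<Prod>p<r - 1. psiT n [C (r - p), C (r - Suc p)])"
    using psiT_eq_prod_adjacent_pairs[of "tensor r C" n] assms by (simp add: tensor_def)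
  also have "\<dots> = (\<Prod>i = 1..<r. psiT n [C (i + 1), C i])"
    by (rule prod.reindex_bij_witness[of _ "\<lambda>i. r - Suc i" "\<lambda>p. r - Suc p"])
      (auto simp: Suc_diff_Suc)
  finally show ?thesis .
qed

text \<open>For columns in \<open>[n]\<close>, a failure of semistandardness shows up as a vanishing factor:
  at the first \<open>k\<close> with \<open>count_le B k > count_le A k\<close> we have \<open>k \<in> B - A\<close> and equal counts
  at \<open>k - 1\<close>, so \<open>psi_factor A B (k - 1) = 1 - t\<^sup>0 = 0\<close>.\<close>

lemma psiT_pair_eq_prod_lessThan:
  assumes A: "A \<subseteq> {1..n}" and B: "B \<subseteq> {1..n}"
  shows "psiT n [A, B] = (\<Prod>i<n. psi_factor A B i)"
proof -
  have finA: "finite A" and finB: "finite B" using A B finite_subset by auto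
  have A0: "0 \<notin> A" and B0: "0 \<notin> B" using A B by auto
  show ?thesis
  proof (cases "semistandard [A, B]")
    case True
    then have "count_le B (Suc 0) \<le> count_le A (Suc 0)"
      using semistandard_pair_iff_count_le[OF finA finB] by blast
    then have "psi_factor A B 0 = 1"
      by (simp add: psi_factor_def count_le_Suc[OF finA] count_le_Suc[OF finB] count_le_0[OF A0]
          count_le_0[OF B0] split: if_splits)
    then have "(\<Prod>i<n. psi_factor A B i) = (\<Prod>i = 1..<n. psi_factor A B i)"
      by (intro prod.mono_neutral_right) (auto simp: not_less_eq_eq)
    then show ?thesis using True psiT_pair_eq_prod_psi_factor[OF finA finB] by simp
  next
    case False
    then obtain k where k: "count_le A k < count_le B k"
      and least: "\<And>i. i < k \<Longrightarrow> count_le B i \<le> count_le A i"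
      using semistandard_pair_iff_count_le[OF finA finB]
        exists_least_iff[of "\<lambda>k. count_le A k < count_le B k"]
      by (auto simp: not_less)
    have "k \<le> n"
    proof (rule ccontr)
      assume "\<not> k \<le> n"
      then have "count_le B k = count_le B n"
        using count_le_eq_card[OF finB, of k] count_le_eq_card[OF finB, of n] B by fastforce
      moreover have "count_le A n \<le> count_le A k" using \<open>\<not> k \<le> n\<close> count_le_mono by simp
      ultimately show False using least[of n] k \<open>\<not> k \<le> n\<close> by simp
    qed
    moreover obtain p where p: "k = Suc p"
      using k count_le_0[OF A0] count_le_0[OF B0] by (cases k) auto
    ultimately have "p < n" by simp
    have "psi_factor A B p = 0"
      using k least[of p] p
      by (auto simp: psi_factor_def count_le_Suc[OF finA] count_le_Suc[OF finB] split: if_splits)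
    then have "(\<Prod>i<n. psi_factor A B i) = 0"
      using \<open>p < n\<close> by (intro prod_zero bexI[of _ p]) auto
    then show ?thesis using False by (simp add: psiT_def)
  qed
qed

lemma sj_eq_image_transpose: "sj j C = transpose j (j + 1) ` C"
  by (simp add: sj_def transpose_def)

lemma mem_sj_iff: "x \<in> sj j C \<longleftrightarrow> transpose j (j + 1) x \<in> C"
  by (simp add: sj_eq_image_transpose in_transpose_image_iff)

lemma sj_subset_atLeastAtMost: "C \<subseteq> {1..n} \<Longrightarrow> 1 \<le> j \<Longrightarrow> j < n \<Longrightarrow> sj j C \<subseteq> {1..n}"
  unfolding sj_def by auto

lemma count_le_sj_eq_card: "count_le (sj j C) i = card {x \<in> C. transpose j (j + 1) x \<le> i}"
proof -
  have "{x \<in> sj j C. x \<le> i} = transpose j (j + 1) ` {x \<in> C. transpose j (j + 1) x \<le> i}"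
    unfolding sj_eq_image_transpose by auto
  then show ?thesis unfolding count_le_def by (simp add: card_image inj_on_subset[OF inj_transpose])
qed

lemma count_le_sj: "i \<noteq> j \<Longrightarrow> count_le (sj j C) i = count_le C i"
  unfolding count_le_sj_eq_card unfolding count_le_def transpose_def
  by (rule arg_cong[where f = card]) auto

lemma psi_factor_sj:
  assumes "i \<noteq> j" "Suc i \<noteq> j"
  shows "psi_factor (sj j A) (sj j B) i = psi_factor A B i"
    and "psi_factor A (sj j B) i = psi_factor A B i"
  using assms by (simp_all add: psi_factor_def count_le_sj mem_sj_iff)

lemma psiT_pair_sj:
  assumes F: "F \<subseteq> {1..n}" and E: "E \<subseteq> {1..n}" and ss: "semistandard [F, E]"
    and "1 \<le> j" "j < n" and jE: "j \<notin> E" "j + 1 \<in> E"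
  shows "psiT n [F, E] =
           (if j \<in> F \<and> j + 1 \<notin> F
            then [:0, 1:] * psiT n [sj j F, sj j E] + (1 - [:0, 1:]) * psiT n [F, sj j E]
            else psiT n [sj j F, sj j E])"
proof -
  obtain i where j: "j = Suc i" using \<open>1 \<le> j\<close> by (cases j) auto
  define t :: "int poly" where "t = [:0, 1:]"
  define R where "R = {..<n} - {i, j}"
  define Q where "Q = (\<Prod>k\<in>R. psi_factor F E k)"
  have finF: "finite F" and finE: "finite E" using F E finite_subset by auto
  have F': "sj j F \<subseteq> {1..n}" and E': "sj j E \<subseteq> {1..n}"
    using sj_subset_atLeastAtMost \<open>1 \<le> j\<close> \<open>j < n\<close> F E by blast+
  have split: "psiT n [X, Y] = (\<Prod>k\<in>R. psi_factor X Y k) * psi_factor X Y i * psi_factor X Y j"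
    if "X \<subseteq> {1..n}" "Y \<subseteq> {1..n}" for X Y
  proof -
    have "{..<n} = insert i (insert j R)" using \<open>j < n\<close> j unfolding R_def by auto
    moreover have "i \<notin> insert j R" "j \<notin> R" "finite R" using j unfolding R_def by auto
    ultimately show ?thesis
      using psiT_pair_eq_prod_lessThan[OF that] by (simp add: mult_ac)
  qed
  have "k \<noteq> j" "Suc k \<noteq> j" if "k \<in> R" for k using that j unfolding R_def by auto
  then have Q': "(\<Prod>k\<in>R. psi_factor (sj j F) (sj j E) k) = Q"
    "(\<Prod>k\<in>R. psi_factor F (sj j E) k) = Q"
    unfolding Q_def by (auto intro!: prod.cong psi_factor_sj)
  define a where "a = count_le F i"
  define e where "e = count_le E i"
  have "e \<le> a" using ss semistandard_pair_iff_count_le[OF finF finE] unfolding a_def e_def by blast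
  have "psiT n [F, E] =
          Q * (if j + 1 \<notin> F then 1 - t ^ (a + (if j \<in> F then 1 else 0) - e) else 1)"
    using split[OF F E] jE j unfolding Q_def a_def e_def t_def psi_factor_def
    by (simp add: count_le_Suc[OF finF] count_le_Suc[OF finE])
  moreover have "psiT n [sj j F, sj j E] = Q * (if j + 1 \<notin> F then 1 - t ^ (a - e) else 1)"
    using split[OF F' E'] Q' jE j unfolding a_def e_def t_def psi_factor_def
    by (simp add: mem_sj_iff count_le_sj)
  moreover have "psiT n [F, sj j E] = Q * (if j \<notin> F then 1 - t ^ (a - e) else 1)"
    using split[OF F E'] Q' jE j unfolding a_def e_def t_def psi_factor_def
    by (simp add: mem_sj_iff count_le_sj)
  text \<open>If \<open>j \<in> F\<close> and \<open>j + 1 \<notin> F\<close>, the claim is \<open>1 - t\<^sup>k\<^sup>+\<^sup>1 = t (1 - t\<^sup>k) + (1 - t)\<close> with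
    \<open>k = a - e\<close>; otherwise \<open>j + 1 \<notin> F\<close> forces \<open>j \<notin> F\<close> and both sides coincide.\<close>
  ultimately show ?thesis
    using \<open>e \<le> a\<close> unfolding t_def by (auto simp: Suc_diff_le algebra_simps)
qed

lemma psiT_pair_initial_column:
  assumes finF: "finite F" and F0: "0 \<notin> F" and ss: "semistandard [F, {1..a}]"
  shows "psiT n [F, {1..a}] = 1"
proof -
  have "psi_factor F {1..a} i = 1" for i
  proof (cases "Suc i \<in> {1..a}")
    case True
    then have "{x \<in> {1..a}. x \<le> Suc i} = {1..Suc i}" by auto
    then have "count_le {1..a} (Suc i) = card {1..Suc i}" unfolding count_le_def by simp
    moreover have "count_le {1..a} (Suc i) \<le> count_le F (Suc i)"
      using ss semistandard_pair_iff_count_le[OF finF finite_atLeastAtMost] by blast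
    ultimately have "card {1..Suc i} \<le> card {x \<in> F. x \<le> Suc i}"
      unfolding count_le_def by simp
    moreover have "{x \<in> F. x \<le> Suc i} \<subseteq> {1..Suc i}"
      using F0 by (auto simp: Suc_le_eq intro: gr0I)
    ultimately have "{x \<in> F. x \<le> Suc i} = {1..Suc i}"
      using card_seteq[OF finite_atLeastAtMost] by blast
    then have "Suc i \<in> {x \<in> F. x \<le> Suc i}" by simp
    then have "Suc i \<in> F" by simp
    then show ?thesis unfolding psi_factor_def by simp
  qed (simp add: psi_factor_def)
  then show ?thesis using psiT_pair_eq_prod_psi_factor[OF finF, of "{1..a}" n] ss by simp
qed

lemma column_subset: "column n l C \<Longrightarrow> C \<subseteq> {1..n}"
  unfolding column_def by simp

theorem proposition4p1:
  fixes n :: nat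
  shows "(\<forall>(r::nat) (l::nat \<Rightarrow> nat) (C::nat \<Rightarrow> nat set).
            1 \<le> r \<and> (\<forall>i\<in>{1..r}. 1 \<le> l i \<and> l i \<le> n \<and> column n (l i) (C i)) \<and>
            (\<forall>i. 1 \<le> i \<and> i < r \<longrightarrow> l i \<le> l (i + 1)) \<longrightarrow>
            psiT n (tensor r C) = (\<Prod>i = 1..<r. psiT n [C (i + 1), C i]))
       \<and> (\<forall>(a::nat) (b::nat) (F::nat set) (E::nat set).
            1 \<le> a \<and> a \<le> b \<and> b \<le> n \<and> column n b F \<and> column n a E \<longrightarrow>
              (\<not> semistandard [F, E] \<longrightarrow> psiT n [F, E] = 0)
            \<and> (E = {1..a} \<and> semistandard [F, E] \<longrightarrow> psiT n [F, E] = 1)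
            \<and> (\<forall>j::nat. 1 \<le> j \<and> j < n \<and> semistandard [F, E] \<and> j \<notin> E \<and> j + 1 \<in> E \<longrightarrow>
                 psiT n [F, E] =
                   (if j \<in> F \<and> j + 1 \<notin> F
                    then [:0, 1:] * psiT n [sj j F, sj j E] + (1 - [:0, 1:]) * psiT n [F, sj j E]
                    else psiT n [sj j F, sj j E])))"
proof (intro conjI allI impI)
  fix r :: nat and l :: "nat \<Rightarrow> nat" and C :: "nat \<Rightarrow> nat set"
  assume "1 \<le> r \<and> (\<forall>i\<in>{1..r}. 1 \<le> l i \<and> l i \<le> n \<and> column n (l i) (C i)) \<and>
            (\<forall>i. 1 \<le> i \<and> i < r \<longrightarrow> l i \<le> l (i + 1))"
  then have "\<forall>i\<in>{1..r}. finite (C i)"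
    using column_subset by (blast intro: finite_subset[OF _ finite_atLeastAtMost])
  then show "psiT n (tensor r C) = (\<Prod>i = 1..<r. psiT n [C (i + 1), C i])"
    by (rule psiT_tensor)
next
  fix a b :: nat and F E :: "nat set"
  assume "1 \<le> a \<and> a \<le> b \<and> b \<le> n \<and> column n b F \<and> column n a E"
  then have F: "F \<subseteq> {1..n}" and E: "E \<subseteq> {1..n}" using column_subset by blast+
  then have "finite F" "0 \<notin> F" using finite_subset by auto
  show "\<not> semistandard [F, E] \<Longrightarrow> psiT n [F, E] = 0"
    by (simp add: psiT_def)
  show "E = {1..a} \<and> semistandard [F, E] \<Longrightarrow> psiT n [F, E] = 1"
    using psiT_pair_initial_column[OF \<open>finite F\<close> \<open>0 \<notin> F\<close>, of a n] by blast
  fix j :: nat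
  assume "1 \<le> j \<and> j < n \<and> semistandard [F, E] \<and> j \<notin> E \<and> j + 1 \<in> E"
  then show "psiT n [F, E] =
               (if j \<in> F \<and> j + 1 \<notin> F
                then [:0, 1:] * psiT n [sj j F, sj j E] + (1 - [:0, 1:]) * psiT n [F, sj j E]
                else psiT n [sj j F, sj j E])"
    using psiT_pair_sj[OF F E] by blast
qed

end
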